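(* Let $(P_n)_{n\geq 0}$ be the Pell sequence: $P_0=0$, $P_1=1$, $P_{n+1}=2P_n+P_{n-1}$ for $n\geq 1$. Let $k,l,m,n$ be positive integers. Then $P_k+2P_l=P_m+2P_n$ if and only if $k=m$ and $l=n$. *)

theory Defs
  imports Main
begin

fun pell :: "nat \<Rightarrow> nat" where
  "pell 0 = 0"
| "pell (Suc 0) = 1"
| "pell (Suc (Suc n)) = 2 * pell (Suc n) + pell n"

end

theory Submission
  imports Defs
begin

text \<open>
  Suppose \<open>m < k\<close>. Then \<open>P l < P n\<close>, so \<open>l < n\<close>. If \<open>n < k\<close>, parity
  (\<open>P j\<close> is even iff \<open>j\<close> is) forces \<open>m \<le> k - 2\<close>, whence
  \<open>P m + 2 P n \<le> P (k - 2) + 2 P (k - 1) = P k < P k + 2 P l\<close>. If \<open>k \<le> n\<close>, then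
  \<open>P k + 2 P l \<le> P n + 2 P (n - 1) \<le> 2 P n < P m + 2 P n\<close>. Both contradict the equation,
  and by symmetry \<open>k = m\<close>; injectivity of \<open>P\<close> on positive indices then gives \<open>l = n\<close>.
\<close>

lemma pell_pos: "n > 0 \<Longrightarrow> pell n > 0"
proof (induction n rule: pell.induct)
  case (3 n) then show ?case by (cases n) auto
qed auto

lemma pell_less_Suc: "n > 0 \<Longrightarrow> pell n < pell (Suc n)"
  by (cases n) (auto simp: pell_pos)

lemma pell_le_Suc: "pell n \<le> pell (Suc n)"
  by (cases n) (auto simp: less_imp_le pell_less_Suc)

lemma pell_mono: "a \<le> b \<Longrightarrow> pell a \<le> pell b"
  by (induction b) (auto simp: le_Suc_eq intro: order_trans[OF _ pell_le_Suc])

lemma pell_strict_mono: "0 < a \<Longrightarrow> a < b \<Longrightarrow> pell a < pell b"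
proof (induction b)
  case (Suc b)
  then show ?case using pell_less_Suc[of b] by (cases "a = b") auto
qed auto

lemma inj_on_pell: "inj_on pell {0<..}"
  by (rule inj_onI) (metis greaterThan_iff linorder_neq_iff pell_strict_mono less_irrefl)

lemma pell_even_iff: "even (pell n) \<longleftrightarrow> even n"
  by (induction n rule: pell.induct) auto

lemma pell_plus_twice_pell_le_pell:
  assumes "a + 2 \<le> k" and "b < k"
  shows "pell a + 2 * pell b \<le> pell k"
proof -
  obtain j where k: "k = Suc (Suc j)"
    using assms(1) by (cases k rule: pell.cases) auto
  have "pell a \<le> pell j" and "pell b \<le> pell (Suc j)"
    using assms k by (auto intro: pell_mono)
  then show ?thesis using k by simp
qed

lemma pell_plus_twice_pell_le_twice_pell:
  assumes "a \<le> n" and "b < n"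
  shows "pell a + 2 * pell b \<le> 2 * pell n"
proof -
  obtain j where n: "n = Suc j"
    using assms(2) by (metis less_imp_Suc_add)
  have "2 * pell j \<le> pell n"
    using n by (cases j) auto
  moreover have "pell a \<le> pell n" and "pell b \<le> pell j"
    using assms n by (auto intro: pell_mono)
  ultimately show ?thesis by linarith
qed

lemma pell_plus_twice_pell_neq:
  assumes "0 < l" "0 < m" "m < k"
  shows "pell k + 2 * pell l \<noteq> pell m + 2 * pell n"
proof
  assume eq: "pell k + 2 * pell l = pell m + 2 * pell n"
  have "pell m < pell k"
    using assms by (intro pell_strict_mono) auto
  with eq have "pell l < pell n" by linarith
  then have "l < n"
    by (metis not_le leD pell_mono)
  have "pell l > 0" "pell m > 0"
    using assms by (auto intro: pell_pos)
  show False
  proof (cases "n < k")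
    case True
    from eq have "even (pell k) = even (pell m)" by presburger
    then have "even k = even m" by (simp add: pell_even_iff)
    with \<open>m < k\<close> have "m + 2 \<le> k"
      by (metis Suc_lessI add_2_eq_Suc' even_Suc less_eq_Suc_le)
    then have "pell m + 2 * pell n \<le> pell k"
      using True by (rule pell_plus_twice_pell_le_pell)
    with eq \<open>pell l > 0\<close> show False by linarith
  next
    case False
    with \<open>l < n\<close> have "pell k + 2 * pell l \<le> 2 * pell n"
      by (intro pell_plus_twice_pell_le_twice_pell) auto
    with eq \<open>pell m > 0\<close> show False by linarith
  qed
qed

theorem corollary1p1:
  fixes k l m n :: nat
  assumes "k > 0" and "l > 0" and "m > 0" and "n > 0"
  shows "pell k + 2 * pell l = pell m + 2 * pell n \<longleftrightarrow> k = m \<and> l = n"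
proof
  assume eq: "pell k + 2 * pell l = pell m + 2 * pell n"
  have "k = m"
    using pell_plus_twice_pell_neq[of l m k n] pell_plus_twice_pell_neq[of n k m l] assms eq
    by (metis linorder_neq_iff)
  with eq have "pell l = pell n" by simp
  with \<open>k = m\<close> show "k = m \<and> l = n"
    using inj_on_pell assms by (auto dest: inj_onD)
qed simp

end
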